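(* Every continuous valuation $\nu$ on a topological space $X$ that takes only finitely many distinct values is point-continuous.
   Context: A valuation on $X$ is a map $\nu:\mathcal OX\to[0,\infty]$ with $\nu(\emptyset)=0$, monotone and modular; continuous if it preserves directed suprema of opens. A valuation $\nu$ is point-continuous if for every open $U$ and every real $r$ with $0\le r<\nu(U)$ there is a finite subset $A\subseteq U$ such that $\nu(V)>r$ for every open $V\supseteq A$. *)

theory Defs
  imports "HOL-Analysis.Analysis" "HOL-Library.Extended_Nonnegative_Real"
begin

text \<open>Valuations on the open sets of a topological space X (abstract topology).
  The values of nu on non-open sets are irrelevant.\<close>

definition valuation :: "'a topology \<Rightarrow> ('a set \<Rightarrow> ennreal) \<Rightarrow> bool" where
  "valuation X \<nu> \<longleftrightarrow>
     \<nu> {} = 0 \<and>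
     (\<forall>U V. openin X U \<and> openin X V \<and> U \<subseteq> V \<longrightarrow> \<nu> U \<le> \<nu> V) \<and>
     (\<forall>U V. openin X U \<and> openin X V \<longrightarrow> \<nu> U + \<nu> V = \<nu> (U \<union> V) + \<nu> (U \<inter> V))"

definition directed_set_family :: "'a set set \<Rightarrow> bool" where
  "directed_set_family \<U> \<longleftrightarrow> \<U> \<noteq> {} \<and>
     (\<forall>U\<in>\<U>. \<forall>V\<in>\<U>. \<exists>W\<in>\<U>. U \<subseteq> W \<and> V \<subseteq> W)"

definition continuous_valuation :: "'a topology \<Rightarrow> ('a set \<Rightarrow> ennreal) \<Rightarrow> bool" where
  "continuous_valuation X \<nu> \<longleftrightarrow> valuation X \<nu> \<and>
     (\<forall>\<U>. \<U> \<subseteq> {U. openin X U} \<and> directed_set_family \<U> \<longrightarrow>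
        \<nu> (\<Union>\<U>) = (SUP U\<in>\<U>. \<nu> U))"

definition point_continuous :: "'a topology \<Rightarrow> ('a set \<Rightarrow> ennreal) \<Rightarrow> bool" where
  "point_continuous X \<nu> \<longleftrightarrow>
     (\<forall>U (r::real). openin X U \<and> 0 \<le> r \<and> ennreal r < \<nu> U \<longrightarrow>
        (\<exists>A. finite A \<and> A \<subseteq> U \<and>
             (\<forall>V. openin X V \<and> A \<subseteq> V \<longrightarrow> ennreal r < \<nu> V)))"

end

theory Submission
  imports Defs
begin

text \<open>For finite \<open>A \<subseteq> U\<close> let \<open>m(A)\<close> be the least value of \<open>\<nu>\<close> on open sets between \<open>A\<close> and \<open>U\<close>.
  Since \<open>m\<close> is monotone and takes only finitely many values, some finite \<open>A\<^sub>0\<close> maximises it.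
  By modularity the open sets between \<open>A\<^sub>0\<close> and \<open>U\<close> of value \<open>m(A\<^sub>0)\<close> are closed under binary
  unions, and by maximality of \<open>A\<^sub>0\<close> they cover \<open>U\<close>; continuity along this directed family
  gives \<open>\<nu>(U) = m(A\<^sub>0)\<close>. Hence every open \<open>V \<supseteq> A\<^sub>0\<close> has \<open>\<nu>(V) \<ge> \<nu>(V \<inter> U) \<ge> \<nu>(U)\<close>.\<close>

lemma valuation_mono:
  "valuation X \<nu> \<Longrightarrow> openin X U \<Longrightarrow> openin X V \<Longrightarrow> U \<subseteq> V \<Longrightarrow> \<nu> U \<le> \<nu> V"
  unfolding valuation_def by blast

lemma valuation_modular:
  "valuation X \<nu> \<Longrightarrow> openin X U \<Longrightarrow> openin X V \<Longrightarrow> \<nu> U + \<nu> V = \<nu> (U \<union> V) + \<nu> (U \<inter> V)"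
  unfolding valuation_def by blast

lemma continuous_valuation_imp_valuation:
  "continuous_valuation X \<nu> \<Longrightarrow> valuation X \<nu>"
  unfolding continuous_valuation_def by blast

lemma continuous_valuation_Union:
  "continuous_valuation X \<nu> \<Longrightarrow> \<U> \<subseteq> {U. openin X U} \<Longrightarrow> directed_set_family \<U> \<Longrightarrow>
    \<nu> (\<Union>\<U>) = (SUP U\<in>\<U>. \<nu> U)"
  unfolding continuous_valuation_def by blast

lemma valuation_Un_eq:
  assumes "valuation X \<nu>" "openin X U" "openin X V"
    and "\<nu> U = c" "\<nu> V = c" "c \<le> \<nu> (U \<inter> V)"
  shows "\<nu> (U \<union> V) = c"
proof (cases "c = \<infinity>")
  case True
  then show ?thesis
    using valuation_mono[of X \<nu> U "U \<union> V"] assms by (auto simp: top_unique)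
next
  case False
  have "\<nu> (U \<inter> V) = c"
    using valuation_mono[of X \<nu> "U \<inter> V" U] assms by auto
  then have "c + \<nu> (U \<union> V) = c + c"
    using valuation_modular[OF assms(1-3)] assms(4,5) by (metis add.commute)
  then show ?thesis
    using False ennreal_add_left_cancel by metis
qed

definition inf_between :: "'a topology \<Rightarrow> ('a set \<Rightarrow> ennreal) \<Rightarrow> 'a set \<Rightarrow> 'a set \<Rightarrow> ennreal" where
  "inf_between X \<nu> A U = (INF V \<in> {V. openin X V \<and> A \<subseteq> V \<and> V \<subseteq> U}. \<nu> V)"

lemma inf_between_le:
  "openin X V \<Longrightarrow> A \<subseteq> V \<Longrightarrow> V \<subseteq> U \<Longrightarrow> inf_between X \<nu> A U \<le> \<nu> V"
  unfolding inf_between_def by (rule INF_lower) blast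

lemma inf_between_mono:
  "A \<subseteq> B \<Longrightarrow> inf_between X \<nu> A U \<le> inf_between X \<nu> B U"
  unfolding inf_between_def by (rule INF_superset_mono) auto

lemma inf_between_attained:
  assumes "finite (\<nu> ` {U. openin X U})" "openin X U" "A \<subseteq> U"
  obtains V where "openin X V" "A \<subseteq> V" "V \<subseteq> U" "\<nu> V = inf_between X \<nu> A U"
proof -
  let ?S = "\<nu> ` {V. openin X V \<and> A \<subseteq> V \<and> V \<subseteq> U}"
  have "finite ?S"
    by (rule finite_subset[OF _ assms(1)]) auto
  moreover have "?S \<noteq> {}"
    using assms(2,3) by auto
  ultimately have "Inf ?S \<in> ?S"
    using Min_in Min_Inf by metis
  then show ?thesis
    using that unfolding inf_between_def by auto
qed

lemma inf_between_maximiser: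
  assumes "finite (\<nu> ` {U. openin X U})" "openin X U"
  obtains A\<^sub>0 where "finite A\<^sub>0" "A\<^sub>0 \<subseteq> U"
    "\<And>A. finite A \<Longrightarrow> A \<subseteq> U \<Longrightarrow> inf_between X \<nu> A U \<le> inf_between X \<nu> A\<^sub>0 U"
proof -
  let ?T = "(\<lambda>A. inf_between X \<nu> A U) ` {A. finite A \<and> A \<subseteq> U}"
  have "?T \<subseteq> \<nu> ` {U. openin X U}"
  proof
    fix t assume "t \<in> ?T"
    then obtain A where "A \<subseteq> U" "t = inf_between X \<nu> A U" by auto
    then show "t \<in> \<nu> ` {U. openin X U}"
      using inf_between_attained[OF assms] by (metis imageI mem_Collect_eq)
  qed
  then have "finite ?T"
    using assms(1) finite_subset by blast
  moreover have "?T \<noteq> {}" by blast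
  ultimately have "Max ?T \<in> ?T"
    by (rule Max_in)
  then obtain A\<^sub>0 where A\<^sub>0: "finite A\<^sub>0" "A\<^sub>0 \<subseteq> U" "inf_between X \<nu> A\<^sub>0 U = Max ?T"
    by auto
  show ?thesis
  proof (rule that[OF A\<^sub>0(1,2)])
    fix A assume "finite A" "A \<subseteq> U"
    then show "inf_between X \<nu> A U \<le> inf_between X \<nu> A\<^sub>0 U"
      unfolding A\<^sub>0(3) using \<open>finite ?T\<close> by (intro Max_ge) auto
  qed
qed

lemma valuation_Un_eq_inf_between:
  assumes val: "valuation X \<nu>"
    and V: "openin X V" "A \<subseteq> V" "V \<subseteq> U" "\<nu> V = inf_between X \<nu> A U"
    and W: "openin X W" "A \<subseteq> W" "W \<subseteq> U" "\<nu> W = inf_between X \<nu> A U"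
  shows "\<nu> (V \<union> W) = inf_between X \<nu> A U"
proof (rule valuation_Un_eq[OF val V(1) W(1) V(4) W(4)])
  show "inf_between X \<nu> A U \<le> \<nu> (V \<inter> W)"
    by (rule inf_between_le) (use V W in \<open>simp_all add: openin_Int le_infI2\<close>)
qed

lemma directed_inf_between_level_set:
  assumes val: "valuation X \<nu>" and fin: "finite (\<nu> ` {U. openin X U})"
    and U: "openin X U" and A: "A \<subseteq> U"
  shows "directed_set_family {V. openin X V \<and> A \<subseteq> V \<and> V \<subseteq> U \<and> \<nu> V = inf_between X \<nu> A U}"
    (is "directed_set_family ?\<D>")
  unfolding directed_set_family_def
proof (intro conjI ballI)
  obtain V\<^sub>0 where "openin X V\<^sub>0" "A \<subseteq> V\<^sub>0" "V\<^sub>0 \<subseteq> U" "\<nu> V\<^sub>0 = inf_between X \<nu> A U"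
    by (rule inf_between_attained[OF fin U A])
  then show "?\<D> \<noteq> {}"
    by blast
next
  fix V W assume "V \<in> ?\<D>" "W \<in> ?\<D>"
  then have V: "openin X V" "A \<subseteq> V" "V \<subseteq> U" "\<nu> V = inf_between X \<nu> A U"
    and W: "openin X W" "A \<subseteq> W" "W \<subseteq> U" "\<nu> W = inf_between X \<nu> A U"
    by simp_all
  have "V \<union> W \<in> ?\<D>"
    using valuation_Un_eq_inf_between[OF val V W] V W by (simp add: openin_Un le_supI1)
  then show "\<exists>Z\<in>?\<D>. V \<subseteq> Z \<and> W \<subseteq> Z"
    by blast
qed

lemma inf_between_maximiser_covers:
  assumes fin: "finite (\<nu> ` {U. openin X U})" and U: "openin X U"
    and A\<^sub>0: "finite A\<^sub>0" "A\<^sub>0 \<subseteq> U"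
    and max: "\<And>A. finite A \<Longrightarrow> A \<subseteq> U \<Longrightarrow> inf_between X \<nu> A U \<le> inf_between X \<nu> A\<^sub>0 U"
    and x: "x \<in> U"
  obtains V where "openin X V" "A\<^sub>0 \<subseteq> V" "x \<in> V" "V \<subseteq> U" "\<nu> V = inf_between X \<nu> A\<^sub>0 U"
proof -
  have sub: "insert x A\<^sub>0 \<subseteq> U"
    using A\<^sub>0(2) x by (rule insert_subsetI[rotated])
  have "inf_between X \<nu> A\<^sub>0 U \<le> inf_between X \<nu> (insert x A\<^sub>0) U"
    by (rule inf_between_mono) (rule subset_insertI)
  moreover have "inf_between X \<nu> (insert x A\<^sub>0) U \<le> inf_between X \<nu> A\<^sub>0 U"
    by (rule max[OF finite_insert[THEN iffD2, OF A\<^sub>0(1)] sub])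
  ultimately have eq: "inf_between X \<nu> (insert x A\<^sub>0) U = inf_between X \<nu> A\<^sub>0 U"
    by (rule antisym[rotated])
  obtain V where "openin X V" "insert x A\<^sub>0 \<subseteq> V" "V \<subseteq> U"
    "\<nu> V = inf_between X \<nu> (insert x A\<^sub>0) U"
    by (rule inf_between_attained[OF fin U sub])
  then show ?thesis
    using that unfolding eq by simp
qed

lemma value_eq_inf_between_maximiser:
  assumes \<nu>: "continuous_valuation X \<nu>" and fin: "finite (\<nu> ` {U. openin X U})"
    and U: "openin X U" and A\<^sub>0: "finite A\<^sub>0" "A\<^sub>0 \<subseteq> U"
    and max: "\<And>A. finite A \<Longrightarrow> A \<subseteq> U \<Longrightarrow> inf_between X \<nu> A U \<le> inf_between X \<nu> A\<^sub>0 U"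
  shows "\<nu> U = inf_between X \<nu> A\<^sub>0 U"
proof -
  define \<D> where "\<D> = {V. openin X V \<and> A\<^sub>0 \<subseteq> V \<and> V \<subseteq> U \<and> \<nu> V = inf_between X \<nu> A\<^sub>0 U}"
  have dir: "directed_set_family \<D>"
    unfolding \<D>_def
    by (rule directed_inf_between_level_set[OF continuous_valuation_imp_valuation[OF \<nu>] fin U A\<^sub>0(2)])
  have "\<Union>\<D> = U"
  proof
    show "\<Union>\<D> \<subseteq> U"
      unfolding \<D>_def by blast
    show "U \<subseteq> \<Union>\<D>"
    proof
      fix x assume "x \<in> U"
      obtain V where "openin X V" "A\<^sub>0 \<subseteq> V" "x \<in> V" "V \<subseteq> U" "\<nu> V = inf_between X \<nu> A\<^sub>0 U"
        by (rule inf_between_maximiser_covers[OF fin U A\<^sub>0 max \<open>x \<in> U\<close>])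
      then show "x \<in> \<Union>\<D>"
        unfolding \<D>_def by blast
    qed
  qed
  moreover have "\<D> \<subseteq> {U. openin X U}"
    unfolding \<D>_def by blast
  ultimately have "\<nu> U = (SUP V\<in>\<D>. \<nu> V)"
    using continuous_valuation_Union[OF \<nu> _ dir] by simp
  also have "\<dots> = (SUP V\<in>\<D>. inf_between X \<nu> A\<^sub>0 U)"
    unfolding \<D>_def by (rule SUP_cong) auto
  also have "\<dots> = inf_between X \<nu> A\<^sub>0 U"
    using dir unfolding directed_set_family_def by (intro SUP_const) blast
  finally show ?thesis .
qed

lemma finite_valued_continuous_valuation_finite_witness:
  assumes \<nu>: "continuous_valuation X \<nu>" and fin: "finite (\<nu> ` {U. openin X U})"
    and U: "openin X U"
  obtains A where "finite A" "A \<subseteq> U" "\<And>V. openin X V \<Longrightarrow> A \<subseteq> V \<Longrightarrow> \<nu> U \<le> \<nu> V"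
proof -
  obtain A\<^sub>0 where A\<^sub>0: "finite A\<^sub>0" "A\<^sub>0 \<subseteq> U"
    and max: "\<And>A. finite A \<Longrightarrow> A \<subseteq> U \<Longrightarrow> inf_between X \<nu> A U \<le> inf_between X \<nu> A\<^sub>0 U"
    using inf_between_maximiser[OF fin U] by blast
  have "\<nu> U \<le> \<nu> V" if "openin X V" "A\<^sub>0 \<subseteq> V" for V
  proof -
    have "\<nu> U = inf_between X \<nu> A\<^sub>0 U"
      by (rule value_eq_inf_between_maximiser[OF \<nu> fin U A\<^sub>0 max])
    also have "\<dots> \<le> \<nu> (V \<inter> U)"
      using that U A\<^sub>0 by (intro inf_between_le) auto
    also have "\<dots> \<le> \<nu> V"
      using that U by (intro valuation_mono[OF continuous_valuation_imp_valuation[OF \<nu>]]) auto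
    finally show ?thesis .
  qed
  then show ?thesis
    using that A\<^sub>0 by blast
qed

theorem proposition4p4:
  fixes X :: "'a topology" and \<nu> :: "'a set \<Rightarrow> ennreal"
  assumes "continuous_valuation X \<nu>"
    and "finite (\<nu> ` {U. openin X U})"
  shows "point_continuous X \<nu>"
  unfolding point_continuous_def
proof (intro allI impI)
  fix U and r :: real
  assume "openin X U \<and> 0 \<le> r \<and> ennreal r < \<nu> U"
  then obtain A where "finite A" "A \<subseteq> U" "\<And>V. openin X V \<Longrightarrow> A \<subseteq> V \<Longrightarrow> \<nu> U \<le> \<nu> V"
    using finite_valued_continuous_valuation_finite_witness[OF assms] by blast
  then show "\<exists>A. finite A \<and> A \<subseteq> U \<and> (\<forall>V. openin X V \<and> A \<subseteq> V \<longrightarrow> ennreal r < \<nu> V)"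
    using \<open>openin X U \<and> 0 \<le> r \<and> ennreal r < \<nu> U\<close> by (meson less_le_trans)
qed

end
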